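(* $X=\{x\in\mathrm{Cay}:\tilde\upsilon(\gamma(x))=\mathrm{sort}(x)\}$.
   Context: $\mathrm{Cay}$ is the set of Cayley permutations (words of positive integers in which every integer from $1$ to the maximum occurs); $\mathrm{sort}(x)$ is the weakly increasing rearrangement of $x$. For $x$ of length $n$, $\gamma(x)$ is the permutation of $[n]$ obtained by sorting the pairs $(x(i),i)$ increasingly by first coordinate, ties by decreasing second coordinate, and reading off the second coordinates. For a permutation $\pi$ of $[n]$ and $i\in[n]$, let $J(i)=0$ if $\pi(i)=1$ and otherwise $J(i)$ is the index with $\pi(J(i))=\pi(i)-1$. The site before $\pi(1)$ is $\eta$-active; the site after $\pi(i)$ is $\eta$-active iff $J(i)<i$, or $i<n$ and $\pi(i)<\pi(i+1)$. $\tilde\upsilon(\pi)$ is the word of length $n$ whose $j$-th letter is the number of $\eta$-active sites to the left of $\pi(j)$. $\eta(\pi)$ is the word with $\eta(\pi)(\pi(j))=\tilde\upsilon(\pi)(j)$ for all $j$, and $X=\{\eta(\pi):\pi\text{ a permutation}\}$. *)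

theory Defs
  imports Main "HOL-Library.Product_Lexorder"
begin

text \<open>Words are lists of naturals; positions and letters are 1-indexed:
  the i-th letter of w (1 \<le> i \<le> length w) is w ! (i-1).\<close>

definition letter :: "nat list \<Rightarrow> nat \<Rightarrow> nat" where
  "letter w i = w ! (i - 1)"

definition Cay :: "nat list set" where
  "Cay = {x. 0 \<notin> set x \<and> (\<forall>k. 1 \<le> k \<and> k \<le> Max (insert 0 (set x)) \<longrightarrow> k \<in> set x)}"

definition is_perm :: "nat list \<Rightarrow> bool" where
  "is_perm p \<longleftrightarrow> distinct p \<and> set p = {1..length p}"

definition gamma :: "nat list \<Rightarrow> nat list" where
  "gamma x = map snd (sort_key (\<lambda>(v, i). (v, - int i)) (zip x [1..<length x + 1]))"

definition Jidx :: "nat list \<Rightarrow> nat \<Rightarrow> nat" where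
  "Jidx p i = (if letter p i = 1 then 0
               else (THE k. 1 \<le> k \<and> k \<le> length p \<and> letter p k = letter p i - 1))"

text \<open>Site k (0 \<le> k \<le> n) is the site after p(k); site 0 is the site before p(1).\<close>
definition eta_active :: "nat list \<Rightarrow> nat \<Rightarrow> bool" where
  "eta_active p k \<longleftrightarrow> k = 0 \<or>
     (1 \<le> k \<and> k \<le> length p \<and>
      (Jidx p k < k \<or> (k < length p \<and> letter p k < letter p (k + 1))))"

definition upsilon_t :: "nat list \<Rightarrow> nat list" where
  "upsilon_t p = map (\<lambda>j. card {k. k < j \<and> eta_active p k}) [1..<length p + 1]"

definition eta :: "nat list \<Rightarrow> nat list" where
  "eta p = map (\<lambda>v. letter (upsilon_t p)
                 (THE j. 1 \<le> j \<and> j \<le> length p \<and> letter p j = v)) [1..<length p + 1]"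

definition Xset :: "nat list set" where
  "Xset = {eta p | p. is_perm p}"

end

theory Submission
  imports Defs "HOL-Library.Multiset"
begin

(* For a permutation p, the word eta p reads upsilon_t p along p: its letter at position p(j)
   is upsilon_t p (j). The word upsilon_t p counts active sites, so it starts at 1, grows in
   unit steps, and is constant from j to j+1 only when the site after p(j) is inactive, which
   forces a descent p(j) > p(j+1). Hence reading eta p at p(1), p(2), ... lists its letters
   weakly increasingly with ties at decreasing positions, which is exactly the order gamma
   produces: gamma (eta p) = p, and sort (eta p) = upsilon_t p has no gaps, so eta p is a
   Cayley permutation. Conversely gamma x reads x in sorted order, so upsilon_t (gamma x) = sort x
   says that x reads as upsilon_t along gamma x, i.e. x = eta (gamma x). *)

declare upt_Suc [simp del]

lemma sort_key_map: "sort_key f (map g xs) = map g (sort_key (f \<circ> g) xs)"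
proof -
  have "insort_key f (g x) (map g ys) = map g (insort_key (f \<circ> g) x ys)" for x ys
    by (induction ys) auto
  then show ?thesis
    by (induction xs) auto
qed

lemma Cay_if_set_eq_atLeastAtMost:
  assumes "set x = {1..m}"
  shows "x \<in> Cay"
proof -
  have "Max (insert 0 {1..m}) = m"
    by (rule Max_eqI) auto
  then show ?thesis
    using assms by (simp add: Cay_def)
qed

lemma is_perm_iff_mset: "is_perm p \<longleftrightarrow> mset p = mset [1..<length p + 1]"
proof
  assume "is_perm p"
  then show "mset p = mset [1..<length p + 1]"
    unfolding is_perm_def
    by (subst set_eq_iff_mset_eq_distinct[symmetric]) (auto simp: atLeastLessThanSuc_atLeastAtMost)
next
  assume mset_p: "mset p = mset [1..<length p + 1]"
  then have "distinct p"
    using mset_eq_imp_distinct_iff by fastforce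
  moreover have "set p = {1..length p}"
    using mset_eq_setD[OF mset_p] by (simp add: atLeastLessThanSuc_atLeastAtMost)
  ultimately show "is_perm p"
    by (simp add: is_perm_def)
qed

lemma map_letter_upt: "map (letter x) [1..<length x + 1] = x"
  by (rule nth_equalityI) (simp_all add: letter_def)

lemma mset_map_letter_perm:
  assumes "is_perm p" "length x = length p"
  shows "mset (map (letter x) p) = mset x"
proof -
  have "mset (map (letter x) p) = mset (map (letter x) [1..<length x + 1])"
    using assms by (simp add: is_perm_iff_mset)
  then show ?thesis
    by (simp only: map_letter_upt)
qed

lemma eq_if_map_letter_perm_eq:
  assumes "is_perm p" "length x = length p" "length y = length p"
    and "map (letter x) p = map (letter y) p"
  shows "x = y"
proof -
  have "set [1..<length x + 1] = set p"
    using assms(1,2) by (simp add: is_perm_def atLeastLessThanSuc_atLeastAtMost)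
  then have "map (letter x) [1..<length x + 1] = map (letter y) [1..<length y + 1]"
    using assms(2-4) by (simp add: map_eq_conv)
  then show ?thesis
    by (simp only: map_letter_upt)
qed

lemma nth_perm_in_range:
  "is_perm p \<Longrightarrow> i < length p \<Longrightarrow> p ! i \<in> {1..length p}"
  unfolding is_perm_def using nth_mem by blast

lemma The_position_perm:
  assumes "is_perm p" "i < length p"
  shows "(THE j. 1 \<le> j \<and> j \<le> length p \<and> letter p j = p ! i) = Suc i"
proof (rule the_equality)
  show "1 \<le> Suc i \<and> Suc i \<le> length p \<and> letter p (Suc i) = p ! i"
    using assms(2) by (simp add: letter_def)
  fix j assume j: "1 \<le> j \<and> j \<le> length p \<and> letter p j = p ! i"
  then have "p ! (j - 1) = p ! i" "j - 1 < length p"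
    by (auto simp: letter_def)
  then have "j - 1 = i"
    using assms by (simp add: is_perm_def nth_eq_iff_index_eq)
  then show "j = Suc i"
    using j by auto
qed

definition count_below :: "(nat \<Rightarrow> bool) \<Rightarrow> nat \<Rightarrow> nat" where
  "count_below P j = card {k. k < j \<and> P k}"

lemma count_below_0 [simp]: "count_below P 0 = 0"
  by (simp add: count_below_def)

lemma count_below_Suc:
  "count_below P (Suc j) = count_below P j + (if P j then 1 else 0)"
proof -
  have "{k. k < Suc j \<and> P k} = {k. k < j \<and> P k} \<union> (if P j then {j} else {})"
    by (auto simp: less_Suc_eq)
  then show ?thesis
    by (simp add: count_below_def)
qed

lemma mono_count_below: "mono (count_below P)"
  by (rule monoI) (auto simp: count_below_def intro: card_mono)

lemma set_map_count_below:
  assumes "P 0"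
  shows "set (map (count_below P) [1..<n + 1]) = {1..count_below P n}"
proof (induction n)
  case 0
  then show ?case by simp
next
  case (Suc n)
  have "count_below P (Suc 0) \<le> count_below P (Suc n)"
    by (rule monoD[OF mono_count_below]) simp
  then have "1 \<le> count_below P (Suc n)"
    using assms by (simp add: count_below_Suc)
  moreover have "set (map (count_below P) [1..<Suc n + 1])
      = {1..count_below P n} \<union> {count_below P (Suc n)}"
    using Suc.IH by (simp add: upt_Suc_append)
  ultimately show ?case
    by (auto simp: count_below_Suc split: if_splits)
qed

lemma upsilon_t_eq_map: "upsilon_t p = map (count_below (eta_active p)) [1..<length p + 1]"
  by (simp add: upsilon_t_def count_below_def)

lemma length_upsilon_t [simp]: "length (upsilon_t p) = length p"
  by (simp add: upsilon_t_def)

lemma nth_upsilon_t: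
  "j < length p \<Longrightarrow> upsilon_t p ! j = count_below (eta_active p) (Suc j)"
  by (simp add: upsilon_t_eq_map add.commute)

lemma sorted_upsilon_t: "sorted (upsilon_t p)"
  unfolding upsilon_t_eq_map
  by (rule sorted_map_mono[OF sorted_upt mono_imp_mono_on[OF mono_count_below]])

lemma set_upsilon_t: "set (upsilon_t p) = {1..count_below (eta_active p) (length p)}"
  unfolding upsilon_t_eq_map by (rule set_map_count_below) (simp add: eta_active_def)

lemma eta_active_if_ascent:
  "Suc j < length p \<Longrightarrow> p ! j < p ! Suc j \<Longrightarrow> eta_active p (Suc j)"
  by (simp add: eta_active_def letter_def)

lemma descent_if_upsilon_t_tie:
  assumes "is_perm p" "Suc j < length p" "upsilon_t p ! Suc j = upsilon_t p ! j"
  shows "p ! Suc j < p ! j"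
proof -
  have "\<not> eta_active p (Suc j)"
    using assms(2,3) by (simp add: nth_upsilon_t count_below_Suc[of _ "Suc j"] split: if_splits)
  then have "\<not> p ! j < p ! Suc j"
    using assms(2) eta_active_if_ascent by blast
  moreover have "p ! j \<noteq> p ! Suc j"
    using assms(1,2) by (simp add: is_perm_def nth_eq_iff_index_eq)
  ultimately show ?thesis by simp
qed

lemma length_eta [simp]: "length (eta p) = length p"
  by (simp add: eta_def)

lemma map_letter_eta:
  assumes "is_perm p"
  shows "map (letter (eta p)) p = upsilon_t p"
proof (rule nth_equalityI)
  fix i assume "i < length (map (letter (eta p)) p)"
  then have i: "i < length p" by simp
  have "p ! i - 1 < length [1..<length p + 1]" "[1..<length p + 1] ! (p ! i - 1) = p ! i"
    using nth_perm_in_range[OF assms i] by auto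
  then have "letter (eta p) (p ! i)
      = letter (upsilon_t p) (THE j. 1 \<le> j \<and> j \<le> length p \<and> letter p j = p ! i)"
    unfolding eta_def letter_def[of "map _ _"] by (simp only: nth_map)
  also have "\<dots> = upsilon_t p ! i"
    unfolding The_position_perm[OF assms i] by (simp add: letter_def)
  finally show "map (letter (eta p)) p ! i = upsilon_t p ! i"
    using i by simp
qed simp

lemma mset_eta: "is_perm p \<Longrightarrow> mset (eta p) = mset (upsilon_t p)"
  using mset_map_letter_perm[of p "eta p"] map_letter_eta[of p] by simp

lemma sort_eta: "is_perm p \<Longrightarrow> sort (eta p) = upsilon_t p"
  by (rule properties_for_sort) (simp_all add: mset_eta sorted_upsilon_t)

lemma eta_in_Cay: "is_perm p \<Longrightarrow> eta p \<in> Cay"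
  using mset_eq_setD[OF mset_eta] set_upsilon_t Cay_if_set_eq_atLeastAtMost by metis

definition gamma_key :: "nat list \<Rightarrow> nat \<Rightarrow> nat \<times> int" where
  "gamma_key x i = (letter x i, - int i)"

lemma gamma_eq_sort_key: "gamma x = sort_key (gamma_key x) [1..<length x + 1]"
proof -
  define pair where "pair i = (letter x i, i)" for i
  have "zip x [1..<length x + 1] = map pair [1..<length x + 1]"
    by (rule nth_equalityI) (simp_all add: pair_def letter_def)
  moreover have "(\<lambda>(v, i). (v, - int i)) \<circ> pair = gamma_key x"
    by (auto simp: pair_def gamma_key_def)
  moreover have "snd \<circ> pair = id"
    by (auto simp: pair_def)
  ultimately show ?thesis
    by (simp add: gamma_def sort_key_map)
qed

lemma length_gamma [simp]: "length (gamma x) = length x"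
  by (simp add: gamma_def)

lemma is_perm_gamma: "is_perm (gamma x)"
  by (simp add: is_perm_iff_mset gamma_eq_sort_key)

lemma gamma_eqI:
  assumes "is_perm q" "length q = length x" "sorted (map (gamma_key x) q)"
  shows "gamma x = q"
  unfolding gamma_eq_sort_key
proof (rule sort_key_inj_key_eq)
  show "mset [1..<length x + 1] = mset q"
    using assms(1,2) by (simp add: is_perm_iff_mset)
  show "inj_on (gamma_key x) (set [1..<length x + 1])"
    by (auto simp: inj_on_def gamma_key_def)
qed (fact assms(3))

lemma map_letter_gamma: "map (letter x) (gamma x) = sort x"
proof (rule properties_for_sort[symmetric])
  show "mset (map (letter x) (gamma x)) = mset x"
    by (rule mset_map_letter_perm[OF is_perm_gamma]) simp
  have "mono (fst :: nat \<times> int \<Rightarrow> nat)"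
    by (auto intro!: monoI simp: less_eq_prod_def)
  moreover have "sorted (map (gamma_key x) (gamma x))"
    by (simp add: gamma_eq_sort_key)
  ultimately have "sorted (map fst (map (gamma_key x) (gamma x)))"
    by (blast intro: sorted_map_mono mono_imp_mono_on)
  then show "sorted (map (letter x) (gamma x))"
    by (simp add: gamma_key_def comp_def)
qed

lemma gamma_eta:
  assumes "is_perm p"
  shows "gamma (eta p) = p"
proof (rule gamma_eqI[OF assms])
  have key: "map (gamma_key (eta p)) p ! j = (upsilon_t p ! j, - int (p ! j))"
    if "j < length p" for j
    using that arg_cong[OF map_letter_eta[OF assms], of "\<lambda>xs. xs ! j"]
    by (simp add: gamma_key_def)
  show "sorted (map (gamma_key (eta p)) p)"
    unfolding sorted_iff_nth_Suc
  proof (intro allI impI)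
    fix j assume "Suc j < length (map (gamma_key (eta p)) p)"
    then have j: "Suc j < length p" by simp
    show "map (gamma_key (eta p)) p ! j \<le> map (gamma_key (eta p)) p ! Suc j"
    proof (cases "upsilon_t p ! Suc j = upsilon_t p ! j")
      case True
      then have "p ! Suc j < p ! j"
        by (rule descent_if_upsilon_t_tie[OF assms j])
      with True show ?thesis
        using key[of j] key[of "Suc j"] j by (simp add: less_eq_prod_def)
    next
      case False
      moreover have "upsilon_t p ! j \<le> upsilon_t p ! Suc j"
        using sorted_upsilon_t j by (simp add: sorted_iff_nth_Suc)
      ultimately show ?thesis
        using key[of j] key[of "Suc j"] j by (simp add: less_eq_prod_def)
    qed
  qed
qed simp

lemma eta_gamma:
  assumes "upsilon_t (gamma x) = sort x"
  shows "eta (gamma x) = x"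
proof (rule eq_if_map_letter_perm_eq[OF is_perm_gamma])
  show "map (letter (eta (gamma x))) (gamma x) = map (letter x) (gamma x)"
    by (simp only: map_letter_eta[OF is_perm_gamma] map_letter_gamma assms)
qed simp_all

theorem lemma7p4:
  shows "Xset = {x \<in> Cay. upsilon_t (gamma x) = sort x}"
proof (intro equalityI subsetI)
  fix x assume "x \<in> Xset"
  then obtain p where "is_perm p" "x = eta p"
    by (auto simp: Xset_def)
  then show "x \<in> {x \<in> Cay. upsilon_t (gamma x) = sort x}"
    by (simp add: eta_in_Cay gamma_eta sort_eta)
next
  fix x assume "x \<in> {x \<in> Cay. upsilon_t (gamma x) = sort x}"
  then have "x = eta (gamma x)"
    by (simp add: eta_gamma)
  then show "x \<in> Xset"
    unfolding Xset_def using is_perm_gamma by blast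
qed

end
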